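(* Let $(X,\mathcal{B})$ be an $\mathrm{SQS}(v)$ and let $B = \{x_1,x_2,x_3,x_4\} \in \mathcal{B}$. Let $p$ be the probability that a block is available and $q = 1-p$. Then \[\mathcal{R}(p) = 1 - 4q^{r_1-1} + 6q^{2r_1-r_2-1} - 4q^{3r_1-3r_2} + q^{4r_1-6r_2+2},\] where $r_1 = \binom{v-1}{2}/3$ and $r_2 = \binom{v-2}{1}/2$.
   Context: A Steiner quadruple system $\mathrm{SQS}(v)$ is a $3$-$(v,4,1)$-design: a set $X$ of $v$ points with a collection $\mathcal{B}$ of $4$-subsets (blocks) such that every $3$-subset of $X$ lies in exactly one block; $r_1$ is the number of blocks containing a given point and $r_2$ the number containing a given pair of points. Reliability model: fix a block $B\in\mathcal{B}$. A repair set for $B$ is a subset $\mathcal{P}\subseteq \mathcal{B}\setminus\{B\}$ with $B \subseteq \bigcup_{B'\in\mathcal{P}} B'$. Each block of $\mathcal{B}\setminus\{B\}$ is, independently of the others, available with probability $p\in[0,1]$; a repair set is available if all of its blocks are available. $\mathcal{R}(p)$ is the probability that at least one available repair set for $B$ exists. *)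

theory Defs
  imports Complex_Main
begin

definition SQS :: "nat \<Rightarrow> 'a set \<Rightarrow> 'a set set \<Rightarrow> bool" where
  "SQS v X Bs \<longleftrightarrow> finite X \<and> card X = v \<and>
     (\<forall>B\<in>Bs. B \<subseteq> X \<and> card B = 4) \<and>
     (\<forall>T. T \<subseteq> X \<and> card T = 3 \<longrightarrow> (\<exists>!B. B \<in> Bs \<and> T \<subseteq> B))"

definition repair_set :: "'a set set \<Rightarrow> 'a set \<Rightarrow> 'a set set \<Rightarrow> bool" where
  "repair_set Bs B P \<longleftrightarrow> P \<subseteq> Bs - {B} \<and> B \<subseteq> \<Union>P"

text \<open>Reliability: each block of Bs - {B} is independently available with
  probability p; R is the probability that the set A of available blocks contains
  some repair set for B (sum over all outcomes A of the product measure).\<close>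
definition reliability :: "'a set set \<Rightarrow> 'a set \<Rightarrow> real \<Rightarrow> real" where
  "reliability Bs B p =
     (\<Sum>A\<in>Pow (Bs - {B}).
        (if \<exists>P. P \<subseteq> A \<and> repair_set Bs B P
         then p ^ card A * (1 - p) ^ card ((Bs - {B}) - A) else 0))"

end

theory Submission
  imports Defs
begin

(* For a point x of B let E x be the set of blocks other than B that contain x. The available
   blocks contain a repair set for B iff they meet every E x, and no block of a set F is
   available with probability q ^ card F; inclusion-exclusion over the points of B therefore
   gives R(p) as the alternating sum over S \<subseteq> B of q ^ card (\<Union>x\<in>S. E x).
   Since a triple of points lies in a unique block, no block other than B contains three points
   of B, so the E x have no triple intersections and the size of the union depends only on
   card S, through r1 - 1 = card (E x) and r2 - 1 = card (E x \<inter> E y); r1 and r2 themselves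
   come from double counting triples. Grouping the subsets S by size yields the formula. *)

lemma sum_Pow_by_card:
  fixes g :: "nat \<Rightarrow> 'b::comm_semiring_1"
  assumes "finite I"
  shows "(\<Sum>S\<in>Pow I. g (card S)) = (\<Sum>k\<le>card I. of_nat (card I choose k) * g k)"
proof -
  have "(\<Sum>S\<in>Pow I. g (card S)) = (\<Sum>k\<le>card I. \<Sum>S\<in>{S\<in>Pow I. card S = k}. g (card S))"
    using assms by (intro sum.group[symmetric]) (auto intro: card_mono)
  also have "\<dots> = (\<Sum>k\<le>card I. of_nat (card I choose k) * g k)"
  proof (rule sum.cong[OF refl])
    fix k
    have "{S\<in>Pow I. card S = k} = {S. S \<subseteq> I \<and> card S = k}" by blast
    then show "(\<Sum>S\<in>{S\<in>Pow I. card S = k}. g (card S)) = of_nat (card I choose k) * g k"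
      using n_subsets[OF assms, of k] by simp
  qed
  finally show ?thesis .
qed

lemma prod_of_bool:
  "finite I \<Longrightarrow> (\<Prod>i\<in>I. of_bool (P i) :: 'b::comm_semiring_1) = of_bool (\<forall>i\<in>I. P i)"
  by (induction I rule: finite_induct) auto

lemma card_Un_disjoint_completion:
  assumes "finite Y" and "S \<subseteq> Y" and "K \<subseteq> Y - S" and "card K = n - card S" and "card S \<le> n"
  shows "card (S \<union> K) = n"
proof -
  have "finite S" "finite K" using assms(1-3) finite_subset by blast+
  then have "card (S \<union> K) = card S + card K"
    using assms(3) by (subst card_Un_disjoint) auto
  then show ?thesis using assms(4,5) by simp
qed

lemma card_UN_no_triple_intersections:
  assumes "finite I"
    and "\<And>i. i \<in> I \<Longrightarrow> finite (E i)"
    and "\<And>i. i \<in> I \<Longrightarrow> card (E i) = a"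
    and "\<And>i j. i \<in> I \<Longrightarrow> j \<in> I \<Longrightarrow> i \<noteq> j \<Longrightarrow> card (E i \<inter> E j) = b"
    and "\<And>i j k. i \<in> I \<Longrightarrow> j \<in> I \<Longrightarrow> k \<in> I \<Longrightarrow> i \<noteq> j \<Longrightarrow> i \<noteq> k \<Longrightarrow> j \<noteq> k
                   \<Longrightarrow> E i \<inter> E j \<inter> E k = {}"
  shows "card (\<Union>i\<in>I. E i) + (card I choose 2) * b = card I * a"
  using assms
proof (induction I rule: finite_induct)
  case empty
  then show ?case by simp
next
  case (insert j I)
  let ?U = "\<Union>i\<in>I. E i"
  have IH: "card ?U + (card I choose 2) * b = card I * a"
    by (rule insert.IH) (simp_all add: insert.prems)
  have fin_U: "finite ?U" and fin_j: "finite (E j)"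
    using insert.hyps(1) insert.prems(1) by simp_all
  have "card (E j \<inter> ?U) = card (\<Union>i\<in>I. E j \<inter> E i)"
    by (rule arg_cong[where f = card]) blast
  also have "\<dots> = (\<Sum>i\<in>I. card (E j \<inter> E i))"
  proof (rule card_UN_disjoint)
    show "\<forall>i\<in>I. finite (E j \<inter> E i)" using fin_j by blast
    show "\<forall>i\<in>I. \<forall>k\<in>I. i \<noteq> k \<longrightarrow> (E j \<inter> E i) \<inter> (E j \<inter> E k) = {}"
    proof (intro ballI impI)
      fix i k assume "i \<in> I" "k \<in> I" "i \<noteq> k"
      moreover have "j \<noteq> i" "j \<noteq> k" using insert.hyps(2) calculation by auto
      ultimately have "E j \<inter> E i \<inter> E k = {}" by (intro insert.prems(4)) auto
      then show "(E j \<inter> E i) \<inter> (E j \<inter> E k) = {}" by blast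
    qed
  qed (rule insert.hyps)
  also have "\<dots> = (\<Sum>i\<in>I. b)"
    using insert.hyps(2) by (intro sum.cong refl insert.prems(3)) auto
  also have "\<dots> = card I * b" by simp
  finally have card_Int: "card (E j \<inter> ?U) = card I * b" .
  have "card (E j \<union> ?U) + card (E j \<inter> ?U) = a + card ?U"
    using card_Un_Int[OF fin_j fin_U] insert.prems(2) by simp
  moreover have "Suc (card I) choose 2 = (card I choose 2) + card I"
    by (simp add: numeral_2_eq_2)
  ultimately show ?case
    using IH card_Int insert.hyps by (simp add: algebra_simps)
qed

lemma sum_Pow_weight_avoiding:
  fixes p :: real
  assumes "finite D" and "F \<subseteq> D"
  shows "(\<Sum>A\<in>Pow D. p ^ card A * (1 - p) ^ card (D - A) * of_bool (A \<inter> F = {}))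
           = (1 - p) ^ card F"
proof -
  let ?f = "\<lambda>C. if C \<in> F then 0 else p"
  have "(\<Sum>A\<in>Pow D. p ^ card A * (1 - p) ^ card (D - A) * of_bool (A \<inter> F = {}))
          = (\<Sum>A\<in>Pow D. (\<Prod>C\<in>A. ?f C) * (\<Prod>C\<in>D - A. 1 - p))"
  proof (rule sum.cong[OF refl])
    fix A assume "A \<in> Pow D"
    then have "finite A" using assms(1) finite_subset by blast
    have "(\<Prod>C\<in>A. ?f C) = p ^ card A * of_bool (A \<inter> F = {})"
    proof (cases "A \<inter> F = {}")
      case True
      then have "(\<Prod>C\<in>A. ?f C) = (\<Prod>C\<in>A. p)" by (intro prod.cong) auto
      then show ?thesis using True by simp
    next
      case False
      then show ?thesis using \<open>finite A\<close> by (auto intro: prod_zero)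
    qed
    then show "p ^ card A * (1 - p) ^ card (D - A) * of_bool (A \<inter> F = {})
                 = (\<Prod>C\<in>A. ?f C) * (\<Prod>C\<in>D - A. 1 - p)"
      by simp
  qed
  also have "\<dots> = (\<Prod>C\<in>D. ?f C + (1 - p))"
    by (rule prod_add[symmetric, OF assms(1)])
  also have "\<dots> = (\<Prod>C\<in>D. if C \<in> F then 1 - p else 1)"
    by (intro prod.cong) auto
  also have "\<dots> = (1 - p) ^ card F"
    unfolding prod.If_cases[OF assms(1)] using assms(2) by (simp add: Int_absorb1)
  finally show ?thesis .
qed

lemma sum_Pow_weight_meets_all:
  fixes p :: real and E :: "'i \<Rightarrow> 'b set"
  assumes "finite D" and "finite I" and "\<And>i. i \<in> I \<Longrightarrow> E i \<subseteq> D"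
  shows "(\<Sum>A\<in>Pow D. p ^ card A * (1 - p) ^ card (D - A) * of_bool (\<forall>i\<in>I. A \<inter> E i \<noteq> {}))
           = (\<Sum>S\<in>Pow I. (-1) ^ card S * (1 - p) ^ card (\<Union>i\<in>S. E i))"
proof -
  have meets_all: "of_bool (\<forall>i\<in>I. A \<inter> E i \<noteq> {})
      = (\<Sum>S\<in>Pow I. (-1) ^ card S * of_bool (A \<inter> (\<Union>i\<in>S. E i) = {}) :: real)" for A
  proof -
    have "of_bool (\<forall>i\<in>I. A \<inter> E i \<noteq> {}) = (\<Prod>i\<in>I. of_bool (A \<inter> E i \<noteq> {}) :: real)"
      using assms(2) by (simp add: prod_of_bool)
    also have "\<dots> = (\<Prod>i\<in>I. 1 - of_bool (A \<inter> E i = {}))"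
      by (intro prod.cong) auto
    also have "\<dots> = (\<Sum>S\<in>Pow I. (-1) ^ card S * (\<Prod>i\<in>S. of_bool (A \<inter> E i = {})))"
      using assms(2) by (simp add: prod_diff_conv_sum)
    also have "\<dots> = (\<Sum>S\<in>Pow I. (-1) ^ card S * of_bool (A \<inter> (\<Union>i\<in>S. E i) = {}))"
    proof (rule sum.cong[OF refl])
      fix S assume "S \<in> Pow I"
      then have "finite S" using assms(2) finite_subset by blast
      moreover have "(\<forall>i\<in>S. A \<inter> E i = {}) \<longleftrightarrow> A \<inter> (\<Union>i\<in>S. E i) = {}" by blast
      ultimately show "(-1) ^ card S * (\<Prod>i\<in>S. of_bool (A \<inter> E i = {}))
                   = (-1) ^ card S * (of_bool (A \<inter> (\<Union>i\<in>S. E i) = {}) :: real)"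
        by (simp add: prod_of_bool)
    qed
    finally show ?thesis .
  qed
  let ?w = "\<lambda>A. p ^ card A * (1 - p) ^ card (D - A)"
  have "(\<Sum>A\<in>Pow D. ?w A * of_bool (\<forall>i\<in>I. A \<inter> E i \<noteq> {}))
      = (\<Sum>A\<in>Pow D. \<Sum>S\<in>Pow I. ?w A * ((-1) ^ card S * of_bool (A \<inter> (\<Union>i\<in>S. E i) = {})))"
    by (simp only: meets_all sum_distrib_left)
  also have "\<dots> = (\<Sum>S\<in>Pow I. \<Sum>A\<in>Pow D. ?w A * ((-1) ^ card S * of_bool (A \<inter> (\<Union>i\<in>S. E i) = {})))"
    by (rule sum.swap)
  also have "\<dots> = (\<Sum>S\<in>Pow I. (-1) ^ card S * (\<Sum>A\<in>Pow D. ?w A * of_bool (A \<inter> (\<Union>i\<in>S. E i) = {})))"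
    by (simp only: sum_distrib_left mult.left_commute)
  also have "\<dots> = (\<Sum>S\<in>Pow I. (-1) ^ card S * (1 - p) ^ card (\<Union>i\<in>S. E i))"
    using assms by (intro sum.cong refl arg_cong2[where f = "(*)"] sum_Pow_weight_avoiding) auto
  finally show ?thesis .
qed

lemma SQS_finite_blocks:
  assumes "SQS v X Bs"
  shows "finite Bs"
proof (rule finite_subset)
  show "Bs \<subseteq> Pow X" using assms unfolding SQS_def by blast
  show "finite (Pow X)" using assms unfolding SQS_def by simp
qed

lemma SQS_blockD:
  assumes "SQS v X Bs" and "C \<in> Bs"
  shows "C \<subseteq> X" and "card C = 4" and "finite C"
  using assms finite_subset[of C X] unfolding SQS_def by auto

lemma SQS_ex1_block:
  assumes "SQS v X Bs" and "T \<subseteq> X" and "card T = 3"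
  shows "\<exists>!C. C \<in> Bs \<and> T \<subseteq> C"
  using assms unfolding SQS_def by simp

lemma SQS_unique_block:
  assumes "SQS v X Bs" and "T \<subseteq> X" and "card T = 3"
    and "C1 \<in> Bs" and "C2 \<in> Bs" and "T \<subseteq> C1" and "T \<subseteq> C2"
  shows "C1 = C2"
  using SQS_ex1_block[OF assms(1-3)] assms(4-7) by blast

lemma SQS_completions_eq_UN:
  assumes "SQS v X Bs" and "S \<subseteq> X" and "card S \<le> 3"
  shows "{K. K \<subseteq> X - S \<and> card K = 3 - card S}
           = (\<Union>C\<in>{C\<in>Bs. S \<subseteq> C}. {K. K \<subseteq> C - S \<and> card K = 3 - card S})"
proof
  show "{K. K \<subseteq> X - S \<and> card K = 3 - card S}
          \<subseteq> (\<Union>C\<in>{C\<in>Bs. S \<subseteq> C}. {K. K \<subseteq> C - S \<and> card K = 3 - card S})"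
  proof
    fix K assume K: "K \<in> {K. K \<subseteq> X - S \<and> card K = 3 - card S}"
    have "finite X" using assms(1) unfolding SQS_def by blast
    then have "card (S \<union> K) = 3" using K assms(2,3) by (intro card_Un_disjoint_completion) auto
    moreover have "S \<union> K \<subseteq> X" using K assms(2) by blast
    ultimately obtain C where "C \<in> Bs" "S \<union> K \<subseteq> C"
      using SQS_ex1_block[OF assms(1)] by blast
    then show "K \<in> (\<Union>C\<in>{C\<in>Bs. S \<subseteq> C}. {K. K \<subseteq> C - S \<and> card K = 3 - card S})"
      using K by blast
  qed
  show "(\<Union>C\<in>{C\<in>Bs. S \<subseteq> C}. {K. K \<subseteq> C - S \<and> card K = 3 - card S})
          \<subseteq> {K. K \<subseteq> X - S \<and> card K = 3 - card S}"
    using SQS_blockD(1)[OF assms(1)] by blast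
qed

lemma SQS_card_blocks_containing:
  assumes sqs: "SQS v X Bs" and "S \<subseteq> X" and "card S \<le> 3"
  shows "card {C\<in>Bs. S \<subseteq> C} * ((4 - card S) choose (3 - card S))
           = (v - card S) choose (3 - card S)"
proof -
  \<comment> \<open>Each completion K of S to a triple lies in exactly one block containing S.\<close>
  let ?k = "3 - card S"
  let ?ext = "\<lambda>Y. {K. K \<subseteq> Y - S \<and> card K = ?k}"
  have fin_X: "finite X" and card_X: "card X = v" using sqs unfolding SQS_def by auto
  have fin_S: "finite S" using assms(2) fin_X by (rule finite_subset)
  have "(v - card S) choose ?k = card (?ext X)"
    using n_subsets[of "X - S" ?k] fin_X fin_S assms(2) card_X by (simp add: card_Diff_subset)
  also have "\<dots> = card (\<Union>C\<in>{C\<in>Bs. S \<subseteq> C}. ?ext C)"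
    using SQS_completions_eq_UN[OF assms] by simp
  also have "\<dots> = (\<Sum>C\<in>{C\<in>Bs. S \<subseteq> C}. card (?ext C))"
  proof (rule card_UN_disjoint)
    show "finite {C\<in>Bs. S \<subseteq> C}" using SQS_finite_blocks[OF sqs] by simp
    show "\<forall>C\<in>{C\<in>Bs. S \<subseteq> C}. finite (?ext C)"
    proof
      fix C assume "C \<in> {C\<in>Bs. S \<subseteq> C}"
      then have "finite (Pow C)" using SQS_blockD(3)[OF sqs] by simp
      then show "finite (?ext C)" by (rule finite_subset[rotated]) blast
    qed
    show "\<forall>C1\<in>{C\<in>Bs. S \<subseteq> C}. \<forall>C2\<in>{C\<in>Bs. S \<subseteq> C}. C1 \<noteq> C2 \<longrightarrow> ?ext C1 \<inter> ?ext C2 = {}"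
    proof (intro ballI impI)
      fix C1 C2 assume C: "C1 \<in> {C\<in>Bs. S \<subseteq> C}" "C2 \<in> {C\<in>Bs. S \<subseteq> C}" "C1 \<noteq> C2"
      show "?ext C1 \<inter> ?ext C2 = {}"
      proof (rule ccontr)
        assume "?ext C1 \<inter> ?ext C2 \<noteq> {}"
        then obtain K where K: "K \<in> ?ext C1" "K \<in> ?ext C2" by blast
        have "card (S \<union> K) = 3"
          using K C assms(3) SQS_blockD(3)[OF sqs] by (intro card_Un_disjoint_completion) auto
        moreover have "S \<union> K \<subseteq> X" "S \<union> K \<subseteq> C1" "S \<union> K \<subseteq> C2"
          using K C assms(2) SQS_blockD(1)[OF sqs] by auto
        ultimately have "C1 = C2" using SQS_unique_block[OF sqs] C by blast
        with C(3) show False ..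
      qed
    qed
  qed
  also have "\<dots> = (\<Sum>C\<in>{C\<in>Bs. S \<subseteq> C}. (4 - card S) choose ?k)"
  proof (rule sum.cong[OF refl])
    fix C assume "C \<in> {C\<in>Bs. S \<subseteq> C}"
    then show "card (?ext C) = (4 - card S) choose ?k"
      using fin_S SQS_blockD[OF sqs] n_subsets[of "C - S" ?k] by (simp add: card_Diff_subset)
  qed
  finally show ?thesis by simp
qed

definition other_blocks_containing :: "'a set set \<Rightarrow> 'a set \<Rightarrow> 'a set \<Rightarrow> 'a set set" where
  "other_blocks_containing Bs B S = {C \<in> Bs - {B}. S \<subseteq> C}"

lemma repair_set_exists_iff:
  assumes "A \<subseteq> Bs - {B}"
  shows "(\<exists>P. P \<subseteq> A \<and> repair_set Bs B P)
           \<longleftrightarrow> (\<forall>x\<in>B. A \<inter> other_blocks_containing Bs B {x} \<noteq> {})"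
proof
  assume "\<exists>P. P \<subseteq> A \<and> repair_set Bs B P"
  then obtain P where "P \<subseteq> A" and "B \<subseteq> \<Union>P" unfolding repair_set_def by blast
  show "\<forall>x\<in>B. A \<inter> other_blocks_containing Bs B {x} \<noteq> {}"
  proof
    fix x assume "x \<in> B"
    then obtain C where "C \<in> P" and "x \<in> C" using \<open>B \<subseteq> \<Union>P\<close> by blast
    then have "C \<in> A \<inter> other_blocks_containing Bs B {x}"
      using \<open>P \<subseteq> A\<close> assms unfolding other_blocks_containing_def by auto
    then show "A \<inter> other_blocks_containing Bs B {x} \<noteq> {}" by blast
  qed
next
  assume "\<forall>x\<in>B. A \<inter> other_blocks_containing Bs B {x} \<noteq> {}"
  then have "B \<subseteq> \<Union>A" unfolding other_blocks_containing_def by auto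
  then show "\<exists>P. P \<subseteq> A \<and> repair_set Bs B P"
    using assms unfolding repair_set_def by blast
qed

lemma reliability_eq_alternating_sum:
  assumes "finite Bs" and "finite B"
  shows "reliability Bs B p
           = (\<Sum>S\<in>Pow B. (-1) ^ card S * (1 - p) ^ card (\<Union>x\<in>S. other_blocks_containing Bs B {x}))"
proof -
  have "reliability Bs B p = (\<Sum>A\<in>Pow (Bs - {B}). p ^ card A * (1 - p) ^ card (Bs - {B} - A)
           * of_bool (\<forall>x\<in>B. A \<inter> other_blocks_containing Bs B {x} \<noteq> {}))"
    unfolding reliability_def
  proof (rule sum.cong[OF refl])
    fix A assume "A \<in> Pow (Bs - {B})"
    then show "(if \<exists>P. P \<subseteq> A \<and> repair_set Bs B P
                 then p ^ card A * (1 - p) ^ card (Bs - {B} - A) else 0)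
        = p ^ card A * (1 - p) ^ card (Bs - {B} - A)
           * of_bool (\<forall>x\<in>B. A \<inter> other_blocks_containing Bs B {x} \<noteq> {})"
      by (simp add: repair_set_exists_iff)
  qed
  also have "\<dots> = (\<Sum>S\<in>Pow B. (-1) ^ card S * (1 - p) ^ card (\<Union>x\<in>S. other_blocks_containing Bs B {x}))"
  proof (rule sum_Pow_weight_meets_all)
    show "finite (Bs - {B})" using assms(1) by simp
    show "other_blocks_containing Bs B {x} \<subseteq> Bs - {B}" for x
      unfolding other_blocks_containing_def by blast
  qed (rule assms(2))
  finally show ?thesis .
qed

lemma SQS_card_other_blocks_containing:
  assumes "SQS v X Bs" and "B \<in> Bs" and "S \<subseteq> B" and "card S \<le> 3"
  shows "Suc (card (other_blocks_containing Bs B S)) * ((4 - card S) choose (3 - card S))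
           = (v - card S) choose (3 - card S)"
proof -
  have "B \<in> {C\<in>Bs. S \<subseteq> C}" using assms(2,3) by blast
  moreover have "finite {C\<in>Bs. S \<subseteq> C}" using SQS_finite_blocks[OF assms(1)] by simp
  moreover have "other_blocks_containing Bs B S = {C\<in>Bs. S \<subseteq> C} - {B}"
    unfolding other_blocks_containing_def by blast
  ultimately have "Suc (card (other_blocks_containing Bs B S)) = card {C\<in>Bs. S \<subseteq> C}"
    by (simp only: card_Suc_Diff1)
  moreover have "S \<subseteq> X" using assms(2,3) SQS_blockD(1)[OF assms(1)] by blast
  ultimately show ?thesis using SQS_card_blocks_containing[OF assms(1) _ assms(4)] by simp
qed

lemma other_blocks_containing_Int:
  "other_blocks_containing Bs B S \<inter> other_blocks_containing Bs B T
     = other_blocks_containing Bs B (S \<union> T)"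
  unfolding other_blocks_containing_def by blast

lemma SQS_card_other_blocks_containing_point:
  assumes "SQS v X Bs" and "B \<in> Bs" and "x \<in> B"
  shows "Suc (card (other_blocks_containing Bs B {x})) = ((v - 1) choose 2) div 3"
proof -
  have "(3::nat) choose 2 = 3" by (simp add: choose_two)
  then show ?thesis using SQS_card_other_blocks_containing[OF assms(1,2), of "{x}"] assms(3) by simp
qed

lemma SQS_card_other_blocks_containing_pair:
  assumes "SQS v X Bs" and "B \<in> Bs" and "x \<in> B" and "y \<in> B" and "x \<noteq> y"
  shows "Suc (card (other_blocks_containing Bs B {x, y})) = ((v - 2) choose 1) div 2"
  using SQS_card_other_blocks_containing[OF assms(1,2), of "{x, y}"] assms(3-5) by simp

lemma SQS_other_blocks_containing_triple:
  assumes "SQS v X Bs" and "B \<in> Bs" and "{x, y, z} \<subseteq> B"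
    and "x \<noteq> y" and "x \<noteq> z" and "y \<noteq> z"
  shows "other_blocks_containing Bs B {x, y, z} = {}"
proof -
  have "card (other_blocks_containing Bs B {x, y, z}) = 0"
    using SQS_card_other_blocks_containing[OF assms(1-3)] assms(4-6) by simp
  moreover have "finite (other_blocks_containing Bs B {x, y, z})"
    using SQS_finite_blocks[OF assms(1)] unfolding other_blocks_containing_def by simp
  ultimately show ?thesis by simp
qed

lemma SQS_card_UN_other_blocks_containing:
  assumes sqs: "SQS v X Bs" and "B \<in> Bs" and "S \<subseteq> B"
  shows "card (\<Union>x\<in>S. other_blocks_containing Bs B {x})
           + (card S choose 2) * (((v - 2) choose 1) div 2 - 1)
         = card S * (((v - 1) choose 2) div 3 - 1)"
proof (rule card_UN_no_triple_intersections)
  show "finite S" using finite_subset[OF assms(3) SQS_blockD(3)[OF sqs assms(2)]] .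
  show "finite (other_blocks_containing Bs B {x})" for x
    using SQS_finite_blocks[OF sqs] unfolding other_blocks_containing_def by simp
  show "card (other_blocks_containing Bs B {x}) = ((v - 1) choose 2) div 3 - 1" if "x \<in> S" for x
    using SQS_card_other_blocks_containing_point[OF sqs assms(2)] that assms(3) by force
  show "card (other_blocks_containing Bs B {x} \<inter> other_blocks_containing Bs B {y})
          = ((v - 2) choose 1) div 2 - 1" if "x \<in> S" "y \<in> S" "x \<noteq> y" for x y
  proof -
    have "x \<in> B" "y \<in> B" using that assms(3) by auto
    then have "Suc (card (other_blocks_containing Bs B {x, y})) = ((v - 2) choose 1) div 2"
      using SQS_card_other_blocks_containing_pair[OF sqs assms(2)] that(3) by blast
    then show ?thesis by (simp add: other_blocks_containing_Int insert_commute)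
  qed
  show "other_blocks_containing Bs B {x} \<inter> other_blocks_containing Bs B {y}
          \<inter> other_blocks_containing Bs B {z} = {}"
    if "x \<in> S" "y \<in> S" "z \<in> S" "x \<noteq> y" "x \<noteq> z" "y \<noteq> z" for x y z
  proof -
    have "{x, y, z} \<subseteq> B" using that(1-3) assms(3) by auto
    then show ?thesis
      using SQS_other_blocks_containing_triple[OF sqs assms(2) _ that(4-6)]
      by (simp add: other_blocks_containing_Int insert_commute)
  qed
qed

theorem mainTheorem9:
  fixes v :: nat and X :: "'a set" and Bs :: "'a set set" and B :: "'a set"
    and p q :: real and r1 r2 :: nat
  assumes "SQS v X Bs"
    and "B \<in> Bs"
    and "0 \<le> p" and "p \<le> 1"
    and "q = 1 - p"
    and "r1 = ((v - 1) choose 2) div 3"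
    and "r2 = ((v - 2) choose 1) div 2"
  shows "reliability Bs B p =
           1 - 4 * q ^ (r1 - 1) + 6 * q ^ (2 * r1 - r2 - 1)
             - 4 * q ^ (3 * r1 - 3 * r2) + q ^ (4 * r1 + 2 - 6 * r2)"
proof -
  let ?E = "\<lambda>x. other_blocks_containing Bs B {x}"
  have fin_B: "finite B" and card_B: "card B = 4" using SQS_blockD[OF assms(1,2)] by auto
  then obtain x y where "x \<in> B" "y \<in> B" "x \<noteq> y"
    by (auto simp: numeral_eq_Suc card_Suc_eq)
  \<comment> \<open>With r1, r2 \<ge> 1 the truncated exponents of the statement are the honest ones.\<close>
  then obtain a b where r1: "r1 = Suc a" and r2: "r2 = Suc b"
    using SQS_card_other_blocks_containing_point[OF assms(1,2)]
      SQS_card_other_blocks_containing_pair[OF assms(1,2)] assms(6,7) by metis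
  have "reliability Bs B p = (\<Sum>S\<in>Pow B. (-1) ^ card S * q ^ card (\<Union>x\<in>S. ?E x))"
    using reliability_eq_alternating_sum[OF SQS_finite_blocks[OF assms(1)] fin_B] assms(5) by simp
  also have "\<dots> = (\<Sum>S\<in>Pow B. (-1) ^ card S * q ^ (card S * a - (card S choose 2) * b))"
  proof (rule sum.cong[OF refl])
    fix S assume "S \<in> Pow B"
    then have "card (\<Union>x\<in>S. ?E x) + (card S choose 2) * b = card S * a"
      using SQS_card_UN_other_blocks_containing[OF assms(1,2), of S]
      unfolding assms(6,7)[symmetric] r1 r2 by simp
    then show "(-1) ^ card S * q ^ card (\<Union>x\<in>S. ?E x)
                 = (-1) ^ card S * q ^ (card S * a - (card S choose 2) * b)"
      by (metis add_diff_cancel_right')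
  qed
  also have "\<dots> = (\<Sum>k\<le>4. of_nat (4 choose k) * ((-1) ^ k * q ^ (k * a - (k choose 2) * b)))"
    using sum_Pow_by_card[OF fin_B, of "\<lambda>k. (-1) ^ k * q ^ (k * a - (k choose 2) * b)"] card_B
    by simp
  also have "\<dots> = 1 - 4 * q ^ a + 6 * q ^ (2 * a - b) - 4 * q ^ (3 * a - 3 * b) + q ^ (4 * a - 6 * b)"
    by (simp add: numeral_eq_Suc choose_two)
  finally show ?thesis unfolding r1 r2 by simp
qed

end
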